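(* For every $y\in[0,1]$, the closure $\overline{R^{-1}(y)}$ of the fiber $R^{-1}(y)$ is a Cantor set of Lebesgue measure zero, and $\overline{R^{-1}(y)}\setminus R^{-1}(y)\subset\mathscr D$ (in particular this remainder is countable).
   Context: Define $\rho$ on binary words: for $b=b_1b_2\dots$, $\rho(b)$ is obtained by deleting every digit $b_n=0$ and replacing every $b_n=1$ by $0$ if $n$ is odd and by $1$ if $n$ is even. For $x\in(0,1]$ let $\beta(x)$ be the unique binary expansion of $x$ with infinitely many $1$'s. Define $R:[0,1]\to[0,1]$ by $R(0)=2/3$ and, for $x\in(0,1]$, $R(x)=\sum_{n\ge1}c_n2^{-n}$ where $c=\rho(\beta(x))$. $\mathscr D$ is the set of dyadic rationals in $[0,1]$. *)

theory Defs
  imports "HOL-Analysis.Analysis" "HOL-Library.Infinite_Set"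
begin

text \<open>Binary words are sequences b :: nat \<Rightarrow> nat indexed from 1 (entry 0 is ignored
  and normalised to 0); digits take values in {0,1}.\<close>

definition binary_word :: "(nat \<Rightarrow> nat) \<Rightarrow> bool" where
  "binary_word b \<longleftrightarrow> b 0 = 0 \<and> (\<forall>n. b n \<in> {0, 1})"

definition beta :: "real \<Rightarrow> nat \<Rightarrow> nat" where
  "beta x = (THE b. binary_word b \<and> infinite {n. n \<ge> 1 \<and> b n = 1}
                 \<and> (\<Sum>n. real (b (Suc n)) / 2 ^ Suc n) = x)"

text \<open>rho on binary words with infinitely many 1's: delete every 0, and replace the 1 at
  position n by 0 if n is odd, by 1 if n is even. The k-th (k \<ge> 1) letter of the output
  comes from the k-th 1 of b, located at position enumerate {n. n\<ge>1 \<and> b n = 1} (k-1).\<close>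
definition rho :: "(nat \<Rightarrow> nat) \<Rightarrow> nat \<Rightarrow> nat" where
  "rho b k = (if k = 0 then 0
              else if even (enumerate {n. n \<ge> 1 \<and> b n = 1} (k - 1)) then 1 else 0)"

definition R :: "real \<Rightarrow> real" where
  "R x = (if x = 0 then 2/3
          else (\<Sum>n. real (rho (beta x) (Suc n)) / 2 ^ Suc n))"

definition dyadics :: "real set" where
  "dyadics = {x. 0 \<le> x \<and> x \<le> 1 \<and> (\<exists>(m::int) (k::nat). x = real_of_int m / 2 ^ k)}"

definition cantor_set :: "'a::topological_space set \<Rightarrow> bool" where
  "cantor_set S \<longleftrightarrow> S \<noteq> {} \<and> compact S \<and> (\<forall>x\<in>S. x islimpt S)
                    \<and> (\<forall>x\<in>S. connected_component_set S x = {x})"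

end

theory Submission
  imports Defs
begin

text \<open>Write \<open>x \<in> (0,1]\<close> as \<open>\<Sum>k. 2^-g(k)\<close>, where \<open>g\<close> lists the positions of the \<open>1\<close>'s of
  \<open>beta x\<close>; then \<open>R x = \<Sum>k. [g(k) even] 2^-(k+1)\<close>, so \<open>R\<close> only sees the parities of the
  positions. Adding \<open>2\<close> to every \<open>g(k)\<close> with \<open>k \<ge> K\<close> keeps \<open>R x\<close> and moves \<open>x\<close> by at most
  \<open>2^-K\<close>, so fibres have no isolated points. Off the dyadics every binary digit of \<open>x\<close> is
  locally constant, so \<open>R\<close> is continuous there and closing a fibre only adds dyadic points.
  Finally \<open>2^g(0) x - 1\<close> is the point with positions \<open>g(k+1) - g(0)\<close>; it lies in the fibre over
  \<open>\<bar>2 R x - 1\<bar>\<close>, and the side of \<open>1/2\<close> on which \<open>R x\<close> lies fixes the parity of \<open>g(0)\<close>.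
  Iterating, a fibre is covered by affine preimages whose total length shrinks by the factor
  \<open>2/3\<close> per step (except once, at \<open>1/2\<close>). So closed fibres are null and contain no interval.\<close>

section \<open>Dyadic estimates\<close>

lemma sums_inverse_pow2_tail: "(\<lambda>m. 1 / 2 ^ Suc (m + n) :: real) sums (1 / 2 ^ n)"
proof -
  have "(\<lambda>m. (1 / 2 ^ n) * (1 / 2 :: real) ^ Suc m) sums ((1 / 2 ^ n) * 1)"
    by (intro sums_mult power_half_series)
  then show ?thesis
    by (simp add: power_add power_divide field_simps)
qed

lemma sums_inverse_pow2: "(\<lambda>k. 1 / 2 ^ Suc k :: real) sums 1"
  using sums_inverse_pow2_tail[of 0] by simp

lemma summable_inverse_pow2: "summable (\<lambda>k. 1 / 2 ^ Suc k :: real)"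
  using sums_inverse_pow2 by (rule sums_summable)

lemma inverse_pow2_antimono: "m \<le> n \<Longrightarrow> 1 / 2 ^ n \<le> (1 :: real) / 2 ^ m"
  by (rule divide_left_mono) (auto intro: power_increasing)

lemma exists_inverse_pow2_less:
  assumes "0 < (e :: real)"
  shows "\<exists>K. 1 / 2 ^ K < e"
proof -
  obtain K where "(1 / 2 :: real) ^ K < e"
    using real_arch_pow_inv[OF assms, of "1 / 2"] by auto
  then show ?thesis
    by (auto simp: power_divide)
qed

lemma dominated_by_inverse_pow2:
  fixes f :: "nat \<Rightarrow> real"
  assumes prefix: "\<And>k. k < K \<Longrightarrow> f k = 0"
    and bound: "\<And>k. \<bar>f k\<bar> \<le> 1 / 2 ^ Suc k"
  shows "summable f" "\<bar>suminf f\<bar> \<le> 1 / 2 ^ K"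
proof -
  show summable: "summable f"
    by (rule summable_comparison_test'[OF summable_inverse_pow2]) (use bound in auto)
  have "suminf f = (\<Sum>m. f (m + K)) + (\<Sum>i<K. f i)"
    by (rule suminf_split_initial_segment[OF summable])
  then have shifted: "suminf f = (\<Sum>m. f (m + K))"
    using prefix by simp
  have summable_abs: "summable (\<lambda>m. \<bar>f (m + K)\<bar>)"
    by (rule summable_comparison_test'[OF sums_summable[OF sums_inverse_pow2_tail[of K]]])
       (use bound in auto)
  have "\<bar>\<Sum>m. f (m + K)\<bar> \<le> (\<Sum>m. \<bar>f (m + K)\<bar>)"
    by (rule summable_rabs[OF summable_abs])
  also have "\<dots> \<le> (\<Sum>m. 1 / 2 ^ Suc (m + K))"
    using summable_abs sums_inverse_pow2_tail[of K] bound
    by (intro suminf_le) (auto simp: sums_iff)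
  also have "\<dots> = 1 / 2 ^ K"
    using sums_inverse_pow2_tail[of K] by (simp add: sums_iff)
  finally show "\<bar>suminf f\<bar> \<le> 1 / 2 ^ K"
    using shifted by simp
qed

lemma sums_even_indicator: "(\<lambda>k. (if even k then 1 else 0) / 2 ^ Suc k :: real) sums (2 / 3)"
proof -
  have "(\<lambda>j. (1 / 2) * (1 / 4 :: real) ^ j) sums ((1 / 2) * (1 / (1 - 1 / 4)))"
    by (intro sums_mult geometric_sums) simp
  then have "(\<lambda>j. (if even (2 * j) then 1 else 0) / 2 ^ Suc (2 * j) :: real) sums (2 / 3)"
    by (simp add: power_mult power_divide)
  moreover have "strict_mono (\<lambda>j :: nat. 2 * j)"
    by (simp add: strict_mono_def)
  ultimately show ?thesis
    by (subst sums_mono_reindex[symmetric]) auto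
qed

lemma countable_dyadics: "countable dyadics"
proof -
  have "dyadics \<subseteq> (\<lambda>(m, k). real_of_int m / 2 ^ k) ` (UNIV :: (int \<times> nat) set)"
    unfolding dyadics_def by auto
  then show ?thesis
    by (rule countable_subset) simp
qed

lemma pow2_times_not_Ints:
  assumes "z \<in> {0..1}" "z \<notin> dyadics"
  shows "2 ^ n * z \<notin> \<int>"
proof
  assume "2 ^ n * z \<in> \<int>"
  then obtain m where "2 ^ n * z = of_int m"
    by (auto elim: Ints_cases)
  then have "z = real_of_int m / 2 ^ n"
    by (simp add: field_simps)
  then show False
    using assms unfolding dyadics_def by auto
qed

section \<open>The expansion \<open>beta\<close>\<close>

definition is_expansion :: "real \<Rightarrow> (nat \<Rightarrow> nat) \<Rightarrow> bool" where
  "is_expansion x b \<longleftrightarrow> binary_word b \<and> infinite {n. n \<ge> 1 \<and> b n = 1}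
     \<and> (\<Sum>n. real (b (Suc n)) / 2 ^ Suc n) = x"

definition ones :: "(nat \<Rightarrow> nat) \<Rightarrow> nat set" where
  "ones b = {n. n \<ge> 1 \<and> b n = 1}"

definition prefix_value :: "(nat \<Rightarrow> nat) \<Rightarrow> nat \<Rightarrow> real" where
  "prefix_value b n = (\<Sum>m<n. real (b (Suc m)) / 2 ^ Suc m)"

lemma binary_word_le_1: "binary_word b \<Longrightarrow> b n \<le> 1"
  unfolding binary_word_def by (metis empty_iff insert_iff le_refl zero_le)

lemma summable_binary_word:
  assumes "binary_word b"
  shows "summable (\<lambda>n. real (b (Suc n)) / 2 ^ Suc n)"
  by (rule summable_comparison_test'[OF summable_inverse_pow2])
     (use binary_word_le_1[OF assms] in \<open>auto simp: divide_simps\<close>)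

lemma prefix_value_Suc:
  "prefix_value b (Suc n) = prefix_value b n + real (b (Suc n)) / 2 ^ Suc n"
  by (simp add: prefix_value_def)

lemma pow2_times_prefix_value_Ints: "\<exists>m :: int. 2 ^ n * prefix_value b n = of_int m"
proof (induction n)
  case 0
  then show ?case
    by (simp add: prefix_value_def)
next
  case (Suc n)
  then obtain m :: int where m: "2 ^ n * prefix_value b n = of_int m"
    by blast
  have "2 ^ Suc n * prefix_value b (Suc n) = 2 * (2 ^ n * prefix_value b n) + real (b (Suc n))"
    by (simp add: prefix_value_Suc algebra_simps)
  then show ?case
    using m by (intro exI[of _ "2 * m + int (b (Suc n))"]) simp
qed

text \<open>The tail after position \<open>n\<close> lies in \<open>(0, 2^-n]\<close>; it is positive because infinitely
  many digits are \<open>1\<close>. Hence the prefix is determined by \<open>x\<close> through a ceiling.\<close>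

lemma is_expansion_prefix_value:
  assumes "is_expansion x b"
  shows "2 ^ n * prefix_value b n = of_int (\<lceil>2 ^ n * x\<rceil> - 1)"
proof -
  let ?f = "\<lambda>n. real (b (Suc n)) / 2 ^ Suc n"
  have word: "binary_word b" and inf: "infinite (ones b)" and x: "suminf ?f = x"
    using assms by (auto simp: is_expansion_def ones_def)
  have summable: "summable ?f"
    by (rule summable_binary_word[OF word])
  have split: "x = (\<Sum>m. ?f (m + n)) + prefix_value b n"
    using suminf_split_initial_segment[OF summable, of n] x by (simp add: prefix_value_def)
  have summable_tail: "summable (\<lambda>m. ?f (m + n))"
    using summable summable_iff_shift[of ?f n] by blast
  obtain j where j: "j \<in> ones b" "j > n"
    using inf unfolding infinite_nat_iff_unbounded by blast
  have "0 < (\<Sum>m. ?f (m + n))"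
  proof (rule suminf_pos2[OF summable_tail, of "j - 1 - n"])
    show "0 \<le> ?f (m + n)" for m
      by simp
    have "Suc (j - 1 - n + n) = j"
      using j by auto
    then show "0 < ?f (j - 1 - n + n)"
      using j by (simp add: ones_def)
  qed
  moreover have "(\<Sum>m. ?f (m + n)) \<le> (\<Sum>m. 1 / 2 ^ Suc (m + n))"
    using summable_tail sums_inverse_pow2_tail[of n] binary_word_le_1[OF word]
    by (intro suminf_le) (auto simp: sums_iff divide_simps)
  then have "(\<Sum>m. ?f (m + n)) \<le> 1 / 2 ^ n"
    using sums_inverse_pow2_tail[of n] by (simp add: sums_iff)
  ultimately have "prefix_value b n < x" "x \<le> prefix_value b n + 1 / 2 ^ n"
    using split by auto
  then have below: "2 ^ n * prefix_value b n < 2 ^ n * x"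
    and above: "2 ^ n * x \<le> 2 ^ n * prefix_value b n + 1"
    by (auto simp: field_simps)
  obtain m :: int where m: "2 ^ n * prefix_value b n = of_int m"
    using pow2_times_prefix_value_Ints by blast
  have "\<lceil>2 ^ n * x\<rceil> = m + 1"
    using below above m by (intro ceiling_unique) auto
  then show ?thesis
    using m by simp
qed

lemma is_expansion_digit:
  assumes "is_expansion x b"
  shows "real (b (Suc n)) = of_int (\<lceil>2 ^ Suc n * x\<rceil> - 2 * \<lceil>2 ^ n * x\<rceil> + 1)"
proof -
  have "2 ^ Suc n * prefix_value b (Suc n) = 2 * (2 ^ n * prefix_value b n) + real (b (Suc n))"
    by (simp add: prefix_value_Suc algebra_simps)
  then show ?thesis
    unfolding is_expansion_prefix_value[OF assms] by simp
qed

lemma is_expansion_unique: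
  assumes "is_expansion x b" "is_expansion x b'"
  shows "b = b'"
proof
  fix n
  show "b n = b' n"
  proof (cases n)
    case 0
    then show ?thesis
      using assms by (simp add: is_expansion_def binary_word_def)
  next
    case (Suc m)
    have "real (b (Suc m)) = real (b' (Suc m))"
      using is_expansion_digit[OF assms(1)] is_expansion_digit[OF assms(2)] by simp
    then show ?thesis
      using Suc by simp
  qed
qed

text \<open>Existence of expansions, which makes the \<open>THE\<close> in \<open>beta\<close> meaningful on \<open>(0,1]\<close>.\<close>

definition ceiling_prefix :: "real \<Rightarrow> nat \<Rightarrow> int" where
  "ceiling_prefix x n = \<lceil>2 ^ n * x\<rceil> - 1"

definition ceiling_digits :: "real \<Rightarrow> nat \<Rightarrow> nat" where
  "ceiling_digits x n =
     (if n = 0 then 0 else nat (ceiling_prefix x n - 2 * ceiling_prefix x (n - 1)))"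

lemma ceiling_prefix_bounds:
  shows "of_int (ceiling_prefix (x :: real) n) < 2 ^ n * x"
    and "2 ^ n * x \<le> of_int (ceiling_prefix x n) + 1"
  unfolding ceiling_prefix_def by (simp_all add: ceiling_correct)

lemma ceiling_prefix_Suc_bounds:
  shows "2 * ceiling_prefix (x :: real) n \<le> ceiling_prefix x (Suc n)"
    and "ceiling_prefix x (Suc n) \<le> 2 * ceiling_prefix x n + 1"
proof -
  have double: "2 ^ Suc n * x = 2 * (2 ^ n * x)"
    by simp
  have "real_of_int (2 * ceiling_prefix x n) < of_int (ceiling_prefix x (Suc n)) + 1"
    and "real_of_int (ceiling_prefix x (Suc n)) < of_int (2 * ceiling_prefix x n + 2)"
    using ceiling_prefix_bounds[where x=x and n=n] ceiling_prefix_bounds[where x=x and n="Suc n"]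
    unfolding double by simp_all
  then show "2 * ceiling_prefix x n \<le> ceiling_prefix x (Suc n)"
    and "ceiling_prefix x (Suc n) \<le> 2 * ceiling_prefix x n + 1"
    by linarith+
qed

lemma ceiling_digits_Suc:
  "int (ceiling_digits (x :: real) (Suc n)) = ceiling_prefix x (Suc n) - 2 * ceiling_prefix x n"
  using ceiling_prefix_Suc_bounds[where x=x and n=n] by (simp add: ceiling_digits_def)

lemma binary_word_ceiling_digits: "binary_word (ceiling_digits (x :: real))"
  unfolding binary_word_def
proof (intro conjI allI)
  show "ceiling_digits x 0 = 0"
    by (simp add: ceiling_digits_def)
  fix n
  show "ceiling_digits x n \<in> {0, 1}"
  proof (cases n)
    case (Suc m)
    have "int (ceiling_digits x n) \<le> 1"
      using ceiling_digits_Suc[where x=x and n=m] ceiling_prefix_Suc_bounds[where x=x and n=m] Suc by simp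
    then show ?thesis
      by auto
  qed (simp add: ceiling_digits_def)
qed

lemma prefix_value_ceiling_digits:
  assumes "0 < x" "x \<le> 1"
  shows "prefix_value (ceiling_digits x) n = of_int (ceiling_prefix x n) / 2 ^ n"
proof (induction n)
  case 0
  have "\<lceil>x\<rceil> = 1"
    using assms by (intro ceiling_unique) auto
  then show ?case
    by (simp add: prefix_value_def ceiling_prefix_def)
next
  case (Suc n)
  have "real (ceiling_digits x (Suc n)) = of_int (ceiling_prefix x (Suc n)) - 2 * of_int (ceiling_prefix x n)"
    using arg_cong[OF ceiling_digits_Suc[where x=x and n=n], of real_of_int] by simp
  then show ?case
    using Suc by (simp add: prefix_value_Suc field_simps)
qed

lemma prefix_value_ceiling_digits_tendsto:
  assumes "0 < x" "x \<le> 1"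
  shows "prefix_value (ceiling_digits x) \<longlonglongrightarrow> x"
proof -
  have bound: "norm (prefix_value (ceiling_digits x) n - x) \<le> 1 / 2 ^ n" for n
  proof -
    have "\<bar>of_int (ceiling_prefix x n) - 2 ^ n * x\<bar> \<le> 1"
      using ceiling_prefix_bounds[where x=x and n=n] by linarith
    moreover have "prefix_value (ceiling_digits x) n - x = (of_int (ceiling_prefix x n) - 2 ^ n * x) / 2 ^ n"
      using prefix_value_ceiling_digits[OF assms, of n] by (simp add: field_simps)
    ultimately show ?thesis
      by (simp add: divide_right_mono)
  qed
  have "(\<lambda>n. 1 / 2 ^ n :: real) \<longlonglongrightarrow> 0"
    by (rule LIMSEQ_divide_realpow_zero) auto
  then have "(\<lambda>n. prefix_value (ceiling_digits x) n - x) \<longlonglongrightarrow> 0"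
    by (rule Lim_null_comparison[rotated]) (use bound in auto)
  then show ?thesis
    by (simp add: Lim_null[symmetric])
qed

lemma is_expansion_ceiling_digits:
  assumes "0 < x" "x \<le> 1"
  shows "is_expansion x (ceiling_digits x)"
proof -
  let ?p = "prefix_value (ceiling_digits x)"
  have sums: "(\<lambda>n. real (ceiling_digits x (Suc n)) / 2 ^ Suc n) sums x"
    unfolding sums_def using prefix_value_ceiling_digits_tendsto[OF assms]
    by (simp add: prefix_value_def[abs_def])
  have "infinite (ones (ceiling_digits x))"
    unfolding infinite_nat_iff_unbounded
  proof (rule ccontr)
    assume "\<not> (\<forall>N. \<exists>n>N. n \<in> ones (ceiling_digits x))"
    then obtain N where N: "\<And>n. n > N \<Longrightarrow> n \<notin> ones (ceiling_digits x)"
      by blast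
    have zero: "ceiling_digits x n = 0" if "n > N" for n
    proof -
      have "ceiling_digits x n \<in> {0, 1}"
        using binary_word_ceiling_digits[of x] by (simp add: binary_word_def)
      then show ?thesis
        using N[OF that] that by (auto simp: ones_def)
    qed
    have const: "?p (m + Suc N) = ?p (Suc N)" for m
      by (induction m) (simp_all add: prefix_value_Suc zero)
    have "(\<lambda>m. ?p (m + Suc N)) \<longlonglongrightarrow> x"
      using LIMSEQ_ignore_initial_segment[OF prefix_value_ceiling_digits_tendsto[OF assms]] .
    then have "?p (Suc N) = x"
      unfolding const by (simp add: LIMSEQ_const_iff)
    moreover have "?p (Suc N) < x"
      using prefix_value_ceiling_digits[OF assms, of "Suc N"] ceiling_prefix_bounds(1)[where x=x and n="Suc N"]
      by (simp add: divide_less_eq mult.commute)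
    ultimately show False
      by simp
  qed
  then show ?thesis
    unfolding is_expansion_def ones_def
    using binary_word_ceiling_digits sums by (simp add: sums_iff)
qed

lemma beta_eqI: "is_expansion x b \<Longrightarrow> beta x = b"
  unfolding beta_def is_expansion_def[symmetric] using is_expansion_unique by blast

lemma is_expansion_beta:
  assumes "0 < x" "x \<le> 1"
  shows "is_expansion x (beta x)"
  using beta_eqI[OF is_expansion_ceiling_digits[OF assms]] is_expansion_ceiling_digits[OF assms]
  by simp

section \<open>Positions of the digits \<open>1\<close>\<close>

text \<open>For \<open>x \<in> (0,1]\<close> let \<open>g = positions x\<close> enumerate the positions of the \<open>1\<close>'s of
  \<open>beta x\<close>. Then \<open>x = seq_value g\<close>, and since the \<open>k\<close>-th letter of \<open>rho (beta x)\<close> is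
  the parity bit of \<open>g (k - 1)\<close>, also \<open>R x = seq_R g\<close>.\<close>

definition position_seq :: "(nat \<Rightarrow> nat) \<Rightarrow> bool" where
  "position_seq g \<longleftrightarrow> strict_mono g \<and> 1 \<le> g 0"

definition seq_value :: "(nat \<Rightarrow> nat) \<Rightarrow> real" where
  "seq_value g = (\<Sum>k. 1 / 2 ^ g k)"

definition seq_R :: "(nat \<Rightarrow> nat) \<Rightarrow> real" where
  "seq_R g = (\<Sum>k. (if even (g k) then 1 else 0) / 2 ^ Suc k)"

definition positions :: "real \<Rightarrow> nat \<Rightarrow> nat" where
  "positions x = enumerate (ones (beta x))"

lemma position_seq_ge_Suc:
  assumes "position_seq g"
  shows "Suc k \<le> g k"
proof (induction k)
  case 0
  then show ?case
    using assms by (simp add: position_seq_def)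
next
  case (Suc k)
  have "g k < g (Suc k)"
    using assms by (simp add: position_seq_def strict_mono_def)
  then show ?case
    using Suc by simp
qed

lemma position_seq_inverse_pow2_le:
  "position_seq g \<Longrightarrow> 1 / 2 ^ g k \<le> (1 :: real) / 2 ^ Suc k"
  by (rule inverse_pow2_antimono[OF position_seq_ge_Suc])

lemma summable_seq_value: "position_seq g \<Longrightarrow> summable (\<lambda>k. 1 / 2 ^ g k :: real)"
  by (rule summable_comparison_test'[OF summable_inverse_pow2])
     (use position_seq_inverse_pow2_le in auto)

lemma summable_seq_R: "summable (\<lambda>k. (if even (g k) then 1 else 0) / 2 ^ Suc k :: real)"
  by (rule summable_comparison_test'[OF summable_inverse_pow2]) auto

lemma seq_R_bounds: "0 \<le> seq_R g" "seq_R g \<le> 1"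
proof -
  show "0 \<le> seq_R g"
    unfolding seq_R_def by (rule suminf_nonneg[OF summable_seq_R]) auto
  have "seq_R g \<le> (\<Sum>k. 1 / 2 ^ Suc k)"
    unfolding seq_R_def by (rule suminf_le[OF _ summable_seq_R summable_inverse_pow2]) auto
  then show "seq_R g \<le> 1"
    using sums_inverse_pow2 by (simp add: sums_iff)
qed

lemma seq_value_bounds:
  assumes "position_seq g"
  shows "0 < seq_value g" "seq_value g \<le> 1"
proof -
  show "0 < seq_value g"
    unfolding seq_value_def by (rule suminf_pos2[OF summable_seq_value[OF assms], of 0]) auto
  have "seq_value g \<le> (\<Sum>k. 1 / 2 ^ Suc k)"
    unfolding seq_value_def
    by (rule suminf_le[OF _ summable_seq_value[OF assms] summable_inverse_pow2])
       (use position_seq_inverse_pow2_le[OF assms] in auto)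
  then show "seq_value g \<le> 1"
    using sums_inverse_pow2 by (simp add: sums_iff)
qed

lemma enumerate_range_strict_mono:
  fixes g :: "nat \<Rightarrow> nat"
  assumes "strict_mono g"
  shows "enumerate (range g) k = g k"
proof (induction k)
  case 0
  have "(LEAST s. s \<in> range g) = g 0"
    by (rule Least_equality) (auto simp: strict_mono_less_eq[OF assms])
  then show ?case
    by (simp add: enumerate_0)
next
  case (Suc k)
  have "infinite (range g)"
    using range_inj_infinite[OF strict_mono_imp_inj_on[OF assms]] .
  moreover have "(LEAST s. s \<in> range g \<and> g k < s) = g (Suc k)"
    by (rule Least_equality)
       (auto simp: strict_mono_less_eq[OF assms] strict_mono_less[OF assms] Suc_le_eq)
  ultimately show ?case
    using Suc by (simp add: enumerate_Suc'')
qed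

definition word_of_positions :: "(nat \<Rightarrow> nat) \<Rightarrow> nat \<Rightarrow> nat" where
  "word_of_positions g n = (if n \<in> range g then 1 else 0)"

lemma sums_positions_iff:
  fixes b g :: "nat \<Rightarrow> nat"
  assumes "position_seq g" "range g = ones b" "binary_word b"
  shows "(\<lambda>k. 1 / 2 ^ g k :: real) sums s \<longleftrightarrow> (\<lambda>n. real (b (Suc n)) / 2 ^ Suc n) sums s"
proof -
  define h where "h k = g k - 1" for k
  have Suc_h: "Suc (h k) = g k" for k
    using position_seq_ge_Suc[OF assms(1), of k] by (simp add: h_def)
  have "strict_mono h"
    using assms(1) unfolding strict_mono_def position_seq_def
    by (metis Suc_h Suc_less_SucD)
  moreover have "real (b (Suc n)) / 2 ^ Suc n = 0" if "n \<notin> range h" for n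
  proof -
    have "Suc n \<notin> range g"
      using that Suc_h by (metis Suc_inject rangeE rangeI)
    then have "b (Suc n) \<noteq> 1"
      using assms(2) by (auto simp: ones_def)
    then show ?thesis
      using binary_word_le_1[OF assms(3), of "Suc n"] by simp
  qed
  moreover have "real (b (Suc (h k))) / 2 ^ Suc (h k) = 1 / 2 ^ g k" for k
  proof -
    have "b (g k) = 1"
      using assms(2) by (metis (mono_tags) mem_Collect_eq ones_def rangeI)
    then show ?thesis
      using Suc_h[of k] by simp
  qed
  ultimately show ?thesis
    using sums_mono_reindex[of h "\<lambda>n. real (b (Suc n)) / 2 ^ Suc n" s] by simp
qed

lemma ones_word_of_positions:
  assumes "position_seq g"
  shows "ones (word_of_positions g) = range g"
proof -
  have "1 \<le> g k" for k
    using position_seq_ge_Suc[OF assms, of k] by simp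
  then show ?thesis
    by (auto simp: ones_def word_of_positions_def)
qed

lemma binary_word_word_of_positions:
  assumes "position_seq g"
  shows "binary_word (word_of_positions g)"
proof -
  have "g k \<noteq> 0" for k
    using position_seq_ge_Suc[OF assms, of k] by simp
  then have "0 \<notin> range g"
    by (metis imageE)
  then show ?thesis
    by (simp add: binary_word_def word_of_positions_def)
qed

lemma is_expansion_seq_value:
  assumes "position_seq g"
  shows "is_expansion (seq_value g) (word_of_positions g)"
proof -
  have "infinite (range g)"
    using assms range_inj_infinite strict_mono_imp_inj_on by (auto simp: position_seq_def)
  moreover have "(\<lambda>k. 1 / 2 ^ g k :: real) sums seq_value g"
    unfolding seq_value_def using summable_seq_value[OF assms] by (simp add: summable_sums)
  then have "(\<lambda>n. real (word_of_positions g (Suc n)) / 2 ^ Suc n) sums seq_value g"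
    using sums_positions_iff[OF assms ones_word_of_positions[OF assms, symmetric]
        binary_word_word_of_positions[OF assms]] by simp
  ultimately show ?thesis
    using binary_word_word_of_positions[OF assms] ones_word_of_positions[OF assms]
    unfolding is_expansion_def ones_def by (simp add: sums_iff)
qed

lemma positions_seq_value:
  assumes "position_seq g"
  shows "positions (seq_value g) = g"
  using beta_eqI[OF is_expansion_seq_value[OF assms]] ones_word_of_positions[OF assms]
    enumerate_range_strict_mono assms
  by (auto simp: positions_def position_seq_def)

lemma
  assumes "0 < x" "x \<le> 1"
  shows position_seq_positions: "position_seq (positions x)"
    and seq_value_positions: "seq_value (positions x) = x"
proof -
  have word: "binary_word (beta x)" and inf: "infinite (ones (beta x))"
    and sums: "(\<lambda>n. real (beta x (Suc n)) / 2 ^ Suc n) sums x"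
    using is_expansion_beta[OF assms] summable_binary_word
    by (auto simp: is_expansion_def ones_def sums_iff)
  have range: "range (positions x) = ones (beta x)"
    unfolding positions_def by (rule range_enumerate[OF inf])
  have "positions x 0 \<in> ones (beta x)"
    using range by auto
  then show seq: "position_seq (positions x)"
    unfolding position_seq_def positions_def
    using strict_mono_enumerate[OF inf] by (simp add: ones_def)
  have "(\<lambda>k. 1 / 2 ^ positions x k :: real) sums x"
    using sums_positions_iff[OF seq range word] sums by simp
  then show "seq_value (positions x) = x"
    by (simp add: seq_value_def sums_iff)
qed

lemma R_eq_seq_R:
  assumes "0 < x" "x \<le> 1"
  shows "R x = seq_R (positions x)"
proof -
  have "real (if P then 1 else (0 :: nat)) = (if P then 1 else 0)" for P
    by simp
  then show ?thesis
    using assms unfolding R_def seq_R_def rho_def positions_def ones_def by simp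
qed

lemma R_seq_value: "position_seq g \<Longrightarrow> R (seq_value g) = seq_R g"
  using R_eq_seq_R[OF seq_value_bounds] positions_seq_value by simp

section \<open>Fibres are nonempty and perfect\<close>

definition tail_positions :: "(nat \<Rightarrow> nat) \<Rightarrow> nat \<Rightarrow> nat" where
  "tail_positions g k = g (Suc k) - g 0"

lemma tail_positions_Suc: "strict_mono g \<Longrightarrow> g (Suc k) = tail_positions g k + g 0"
  by (simp add: tail_positions_def strict_mono_less less_imp_le)

lemma position_seq_tail_positions:
  assumes "position_seq g"
  shows "position_seq (tail_positions g)"
proof -
  have mono: "strict_mono g"
    using assms by (simp add: position_seq_def)
  have "tail_positions g m < tail_positions g n" if "m < n" for m n
    using strict_monoD[OF mono, of "Suc m" "Suc n"] that
      tail_positions_Suc[OF mono, of m] tail_positions_Suc[OF mono, of n]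
    by simp
  then have "strict_mono (tail_positions g)"
    by (simp add: strict_mono_def)
  moreover have "1 \<le> tail_positions g 0"
    using strict_monoD[OF mono, of 0 1] by (simp add: tail_positions_def)
  ultimately show ?thesis
    by (simp add: position_seq_def)
qed

lemma seq_value_tail_positions:
  assumes "position_seq g"
  shows "seq_value g = (1 + seq_value (tail_positions g)) / 2 ^ g 0"
proof -
  have mono: "strict_mono g"
    using assms by (simp add: position_seq_def)
  have "seq_value g = 1 / 2 ^ g 0 + (\<Sum>k. 1 / 2 ^ g (Suc k))"
    unfolding seq_value_def using suminf_split_head[OF summable_seq_value[OF assms]] by simp
  also have "(\<lambda>k. 1 / 2 ^ g (Suc k) :: real) = (\<lambda>k. (1 / 2 ^ g 0) * (1 / 2 ^ tail_positions g k))"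
    by (simp add: tail_positions_Suc[OF mono] power_add mult.commute)
  also have "(\<Sum>k. (1 / 2 ^ g 0) * (1 / 2 ^ tail_positions g k :: real))
      = (1 / 2 ^ g 0) * seq_value (tail_positions g)"
    unfolding seq_value_def
    by (rule suminf_mult[OF summable_seq_value[OF position_seq_tail_positions[OF assms]]])
  finally show ?thesis
    by (simp add: field_simps)
qed

text \<open>The parities of the later positions flip exactly when \<open>g 0\<close> is odd.\<close>

lemma seq_R_tail_positions:
  assumes "strict_mono g"
  shows "seq_R g = (if even (g 0) then 1 / 2 + seq_R (tail_positions g) / 2
                    else 1 / 2 - seq_R (tail_positions g) / 2)"
proof -
  let ?g' = "tail_positions g"
  let ?p = "\<lambda>h k. (if even (h k) then 1 else 0) / 2 ^ Suc k :: real"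
  have "seq_R g = 1 / 2 * (if even (g 0) then 1 else 0) + (\<Sum>k. ?p g (Suc k))"
    unfolding seq_R_def using suminf_split_head[OF summable_seq_R[of g]] by simp
  also have "(\<Sum>k. ?p g (Suc k)) = (if even (g 0) then seq_R ?g' / 2 else 1 / 2 - seq_R ?g' / 2)"
  proof (cases "even (g 0)")
    case True
    then have "(\<lambda>k. ?p g (Suc k)) = (\<lambda>k. 1 / 2 * ?p ?g' k)"
      by (simp add: tail_positions_Suc[OF assms])
    then have "(\<Sum>k. ?p g (Suc k)) = (\<Sum>k. 1 / 2 * ?p ?g' k)"
      by (rule arg_cong[where f = suminf])
    also have "\<dots> = 1 / 2 * seq_R ?g'"
      unfolding seq_R_def by (rule suminf_mult[OF summable_seq_R])
    finally show ?thesis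
      using True by simp
  next
    case False
    then have "(\<lambda>k. ?p g (Suc k)) = (\<lambda>k. 1 / 2 * (1 / 2 ^ Suc k - ?p ?g' k))"
      by (auto simp: tail_positions_Suc[OF assms] fun_eq_iff)
    then have "(\<Sum>k. ?p g (Suc k)) = (\<Sum>k. 1 / 2 * (1 / 2 ^ Suc k - ?p ?g' k))"
      by (rule arg_cong[where f = suminf])
    also have "\<dots> = 1 / 2 * (\<Sum>k. 1 / 2 ^ Suc k - ?p ?g' k)"
      by (rule suminf_mult[OF summable_diff[OF summable_inverse_pow2 summable_seq_R]])
    also have "(\<Sum>k. 1 / 2 ^ Suc k - ?p ?g' k) = (\<Sum>k. 1 / 2 ^ Suc k) - seq_R ?g'"
      unfolding seq_R_def by (rule suminf_diff[OF summable_inverse_pow2 summable_seq_R, symmetric])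
    also have "(\<Sum>k. 1 / 2 ^ Suc k :: real) = 1"
      using sums_inverse_pow2 by (simp add: sums_iff)
    finally show ?thesis
      using False by (simp add: algebra_simps)
  qed
  finally show ?thesis
    by (simp add: algebra_simps)
qed

definition push_positions :: "nat \<Rightarrow> (nat \<Rightarrow> nat) \<Rightarrow> nat \<Rightarrow> nat" where
  "push_positions K g k = (if k < K then g k else g k + 2)"

lemma position_seq_push_positions:
  assumes "position_seq g"
  shows "position_seq (push_positions K g)"
proof -
  have "push_positions K g m < push_positions K g n" if "m < n" for m n
    using that assms strict_monoD[of g, OF _ that] by (auto simp: position_seq_def push_positions_def)
  then show ?thesis
    using assms by (simp add: position_seq_def strict_mono_def push_positions_def)
qed

lemma seq_R_push_positions: "seq_R (push_positions K g) = seq_R g"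
proof -
  have "even (push_positions K g k) \<longleftrightarrow> even (g k)" for k
    by (simp add: push_positions_def)
  then show ?thesis
    by (simp only: seq_R_def)
qed

lemma seq_value_push_positions:
  assumes g: "position_seq g"
  shows "0 < seq_value g - seq_value (push_positions K g)"
    and "seq_value g - seq_value (push_positions K g) \<le> 1 / 2 ^ K"
proof -
  define d :: "nat \<Rightarrow> real" where "d k = 1 / 2 ^ g k - 1 / 2 ^ push_positions K g k" for k
  have diff: "seq_value g - seq_value (push_positions K g) = suminf d"
    unfolding seq_value_def d_def
    by (rule suminf_diff[OF summable_seq_value[OF g]
          summable_seq_value[OF position_seq_push_positions[OF g]]])
  have prefix: "d k = 0" if "k < K" for k
    using that by (simp add: d_def push_positions_def)
  have nonneg: "0 \<le> d k" for k
    using inverse_pow2_antimono[of "g k" "g k + 2"] by (simp add: d_def push_positions_def)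
  have bound: "\<bar>d k\<bar> \<le> 1 / 2 ^ Suc k" for k
  proof -
    have "\<bar>d k\<bar> \<le> 1 / 2 ^ g k"
      using nonneg[of k] by (simp add: d_def)
    then show ?thesis
      using position_seq_inverse_pow2_le[OF g, of k] by linarith
  qed
  show "seq_value g - seq_value (push_positions K g) \<le> 1 / 2 ^ K"
    using dominated_by_inverse_pow2(2)[of K d, OF prefix bound] diff by simp
  have "0 < d K"
    by (simp add: d_def push_positions_def)
  then show "0 < seq_value g - seq_value (push_positions K g)"
    using diff suminf_pos2[OF dominated_by_inverse_pow2(1)[of K d, OF prefix bound] nonneg]
    by simp
qed

lemma R_inverse_pow2_odd: "R (1 / 2 ^ Suc (2 * K)) = 2 / 3"
proof -
  define g where "g k = k + 2 + 2 * K" for k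
  have g: "position_seq g"
    by (simp add: g_def position_seq_def strict_mono_def)
  have "(\<lambda>k. 1 / 2 ^ g k :: real) = (\<lambda>k. (1 / 2 ^ Suc (2 * K)) * (1 / 2 ^ Suc k))"
    by (simp add: g_def power_add field_simps)
  then have "seq_value g = 1 / 2 ^ Suc (2 * K)"
    unfolding seq_value_def using sums_mult[OF sums_inverse_pow2, of "1 / 2 ^ Suc (2 * K)"]
    by (simp add: sums_iff)
  moreover have "seq_R g = 2 / 3"
    using sums_even_indicator by (simp add: seq_R_def g_def sums_iff)
  ultimately show ?thesis
    using R_seq_value[OF g] by simp
qed

text \<open>Positions \<open>2 k + 2\<close> or \<open>2 k + 3\<close> realise any prescribed parity pattern, hence any
  binary expansion of \<open>y\<close>.\<close>

lemma exists_position_seq_seq_R: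
  assumes "0 \<le> y" "y \<le> 1"
  shows "\<exists>g. position_seq g \<and> seq_R g = y"
proof -
  define c where "c k = (if y = 0 then 0 else beta y (Suc k))" for k
  have "(\<lambda>k. real (c k) / 2 ^ Suc k) sums y \<and> (\<forall>k. c k \<le> 1)"
  proof (cases "y = 0")
    case False
    then have "is_expansion y (beta y)"
      using is_expansion_beta assms by simp
    then show ?thesis
      using False summable_binary_word binary_word_le_1
      by (auto simp: c_def is_expansion_def sums_iff)
  qed (simp add: c_def)
  then have sums: "(\<lambda>k. real (c k) / 2 ^ Suc k) sums y" and c_le: "c k \<le> 1" for k
    by auto
  define g where "g k = 2 * k + 3 - c k" for k
  have "g m < g n" if "m < n" for m n
    using that c_le[of m] c_le[of n] by (simp add: g_def)
  then have "position_seq g"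
    using c_le[of 0] by (simp add: position_seq_def strict_mono_def g_def)
  moreover have "(if even (g k) then 1 else 0) = real (c k)" for k
    using c_le[of k] by (auto simp: g_def le_Suc_eq)
  then have "seq_R g = y"
    using sums by (simp add: seq_R_def sums_iff)
  ultimately show ?thesis
    by blast
qed

abbreviation fibre :: "real \<Rightarrow> real set" where
  "fibre y \<equiv> R -` {y} \<inter> {0..1}"

lemma fibre_nonempty:
  assumes "y \<in> {0..1}"
  shows "fibre y \<noteq> {}"
proof -
  obtain g where g: "position_seq g" "seq_R g = y"
    using exists_position_seq_seq_R assms by auto
  then have "seq_value g \<in> fibre y"
    using R_seq_value[OF g(1)] seq_value_bounds[OF g(1)] by auto
  then show ?thesis
    by blast
qed

text \<open>Pushing the positions beyond the \<open>K\<close>-th one by \<open>2\<close> keeps \<open>R\<close> and moves the point by at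
  most \<open>2^-K\<close>; the point \<open>0\<close> is approached along \<open>R (1 / 2^(2K+1)) = 2/3 = R 0\<close>.\<close>

lemma fibre_islimpt:
  assumes x: "x \<in> fibre y"
  shows "x islimpt fibre y"
  unfolding islimpt_approachable
proof (intro allI impI)
  fix e :: real
  assume "0 < e"
  then obtain K where K: "1 / 2 ^ K < e"
    using exists_inverse_pow2_less by blast
  show "\<exists>x'\<in>fibre y. x' \<noteq> x \<and> dist x' x < e"
  proof (cases "x = 0")
    case True
    then have "y = 2 / 3"
      using x by (simp add: R_def)
    then have "1 / 2 ^ Suc (2 * K) \<in> fibre y"
      using R_inverse_pow2_odd[of K] inverse_pow2_antimono[of 0 "Suc (2 * K)"] by simp
    moreover have "1 / 2 ^ Suc (2 * K) \<le> (1 :: real) / 2 ^ K"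
      by (rule inverse_pow2_antimono) simp
    ultimately show ?thesis
      using True K by (intro bexI[of _ "1 / 2 ^ Suc (2 * K)"]) (auto simp: dist_real_def)
  next
    case False
    then have x01: "0 < x" "x \<le> 1"
      using x by auto
    let ?g = "positions x"
    let ?h = "push_positions K ?g"
    have g: "position_seq ?g"
      by (rule position_seq_positions[OF x01])
    have h: "position_seq ?h"
      by (rule position_seq_push_positions[OF g])
    have "R (seq_value ?h) = y"
      using R_seq_value[OF h] seq_R_push_positions R_eq_seq_R[OF x01] x by simp
    then have "seq_value ?h \<in> fibre y"
      using seq_value_bounds[OF h] by simp
    moreover have "0 < x - seq_value ?h" "x - seq_value ?h \<le> 1 / 2 ^ K"
      using seq_value_push_positions[OF g, of K] seq_value_positions[OF x01] by simp_all
    ultimately show ?thesis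
      using K by (intro bexI[of _ "seq_value ?h"]) (simp_all add: dist_real_def)
  qed
qed

section \<open>Continuity of \<open>R\<close> off the dyadics\<close>

lemma enumerate_0_cong_below:
  fixes S S' :: "nat set"
  assumes "infinite S" "\<And>n. n \<le> N \<Longrightarrow> n \<in> S \<longleftrightarrow> n \<in> S'" "enumerate S 0 \<le> N"
  shows "enumerate S' 0 = enumerate S 0"
proof -
  let ?m = "LEAST n. n \<in> S"
  have m: "?m \<in> S" "?m \<le> N"
    using enumerate_in_set[OF assms(1), of 0] assms(3) by (simp_all add: enumerate_0)
  have "(LEAST n. n \<in> S') = ?m"
  proof (rule Least_equality)
    show "?m \<in> S'"
      using m assms(2) by blast
    show "?m \<le> j" if "j \<in> S'" for j
    proof (cases "j \<le> N")
      case True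
      then show ?thesis
        using that assms(2) by (simp add: Least_le)
    qed (use m in simp)
  qed
  then show ?thesis
    by (simp add: enumerate_0)
qed

lemma enumerate_cong_below:
  fixes S S' :: "nat set"
  assumes "infinite S" "infinite S'" "\<And>n. n \<le> N \<Longrightarrow> n \<in> S \<longleftrightarrow> n \<in> S'"
    and "enumerate S k \<le> N"
  shows "enumerate S' k = enumerate S k"
  using assms
proof (induction k arbitrary: S S')
  case 0
  then show ?case
    using enumerate_0_cong_below by blast
next
  case (Suc k)
  have "enumerate S 0 \<le> N"
    using Suc.prems(4) enumerate_mono[of 0 "Suc k" S, OF _ Suc.prems(1)] by simp
  then have first: "enumerate S' 0 = enumerate S 0"
    using enumerate_0_cong_below[of S N S'] Suc.prems by blast
  have "enumerate (S' - {enumerate S 0}) k = enumerate (S - {enumerate S 0}) k"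
    using Suc.prems by (intro Suc.IH) (auto simp: enumerate_Suc')
  then show ?case
    by (simp only: enumerate_Suc' first)
qed

lemma seq_R_diff_le:
  assumes "\<And>k. k < K \<Longrightarrow> g k = h k"
  shows "\<bar>seq_R g - seq_R h\<bar> \<le> 1 / 2 ^ K"
proof -
  define f :: "nat \<Rightarrow> real"
    where "f k = (if even (g k) then 1 else 0) / 2 ^ Suc k - (if even (h k) then 1 else 0) / 2 ^ Suc k" for k
  have "seq_R g - seq_R h = suminf f"
    unfolding seq_R_def f_def by (rule suminf_diff[OF summable_seq_R summable_seq_R])
  moreover have "\<bar>suminf f\<bar> \<le> 1 / 2 ^ K"
    by (rule dominated_by_inverse_pow2(2)) (auto simp: f_def assms)
  ultimately show ?thesis
    by simp
qed

text \<open>Off the dyadics every \<open>\<lceil>2^n x\<rceil>\<close>, hence every digit of \<open>beta x\<close>, is locally constant.\<close>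

lemma eventually_beta_eq:
  assumes "0 < z" "z < 1" "\<And>n :: nat. 2 ^ n * z \<notin> \<int>"
  shows "\<forall>\<^sub>F x in at z. 0 < x \<and> x < 1 \<and> (\<forall>n\<le>N. beta x n = beta z n)"
proof -
  have "\<forall>\<^sub>F x in at z. \<forall>m\<in>{..N}. \<lceil>2 ^ m * x\<rceil> = \<lceil>2 ^ m * z\<rceil>"
  proof (rule eventually_ball_finite)
    show "\<forall>m\<in>{..N}. \<forall>\<^sub>F x in at z. \<lceil>2 ^ m * x\<rceil> = \<lceil>2 ^ m * z\<rceil>"
      using assms(3) by (auto intro!: eventually_ceiling_eq tendsto_intros)
  qed simp
  moreover have "\<forall>\<^sub>F x in at z. 0 < x" "\<forall>\<^sub>F x in at z. x < 1"
    using assms(1,2) by (auto intro: order_tendstoD tendsto_ident_at)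
  ultimately show ?thesis
  proof eventually_elim
    case (elim x)
    have "beta x n = beta z n" if "n \<le> N" for n
    proof (cases n)
      case 0
      then show ?thesis
        using is_expansion_beta[of x] is_expansion_beta[of z] elim assms
        by (simp add: is_expansion_def binary_word_def)
    next
      case (Suc m)
      have "\<lceil>2 ^ Suc m * x\<rceil> = \<lceil>2 ^ Suc m * z\<rceil>" "\<lceil>2 ^ m * x\<rceil> = \<lceil>2 ^ m * z\<rceil>"
        using elim(1) that Suc by (simp_all del: power_Suc)
      then have "real (beta x n) = real (beta z n)"
        using is_expansion_digit[OF is_expansion_beta, of x m] is_expansion_digit[OF is_expansion_beta, of z m]
          elim assms Suc
        by simp
      then show ?thesis
        by simp
    qed
    then show ?case
      using elim by simp
  qed
qed

lemma positions_eq_if_beta_eq: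
  assumes x: "0 < x" "x \<le> 1" and z: "0 < z" "z \<le> 1"
    and beta_eq: "\<And>n. n \<le> positions z K \<Longrightarrow> beta x n = beta z n"
    and "k \<le> K"
  shows "positions x k = positions z k"
proof -
  have inf: "infinite (ones (beta z))" "infinite (ones (beta x))"
    using is_expansion_beta x z by (auto simp: is_expansion_def ones_def)
  have "positions z k \<le> positions z K"
    using position_seq_positions[OF z] \<open>k \<le> K\<close>
    by (simp add: position_seq_def strict_mono_less_eq)
  then have below: "enumerate (ones (beta z)) k \<le> positions z K"
    by (simp only: positions_def)
  have agree: "n \<in> ones (beta z) \<longleftrightarrow> n \<in> ones (beta x)" if "n \<le> positions z K" for n
    using beta_eq[OF that] by (simp add: ones_def)
  show ?thesis
    unfolding positions_def by (rule enumerate_cong_below[OF inf agree below])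
qed

lemma eventually_R_close:
  assumes "0 < z" "z < 1" "\<And>n :: nat. 2 ^ n * z \<notin> \<int>"
  shows "\<forall>\<^sub>F x in at z. \<bar>R x - R z\<bar> \<le> 1 / 2 ^ K"
  using eventually_beta_eq[OF assms, of "positions z K"]
proof eventually_elim
  case (elim x)
  then have "positions x k = positions z k" if "k < K" for k
    using assms that by (intro positions_eq_if_beta_eq) auto
  then show ?case
    using elim assms by (simp add: R_eq_seq_R seq_R_diff_le)
qed

lemma closure_fibre_diff_subset_dyadics: "closure (fibre y) - fibre y \<subseteq> dyadics"
proof
  fix z
  assume z: "z \<in> closure (fibre y) - fibre y"
  have "closure (fibre y) \<subseteq> {0..1}"
    by (rule closure_minimal) auto
  then have z01: "z \<in> {0..1}"
    using z by auto
  show "z \<in> dyadics"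
  proof (rule ccontr)
    assume nondyadic: "z \<notin> dyadics"
    have "0 \<in> dyadics" "1 \<in> dyadics"
      unfolding dyadics_def by (auto intro!: exI[of _ "0 :: nat"] exI[of _ "0 :: int"] exI[of _ "1 :: int"])
    then have z_open: "0 < z" "z < 1"
      using z01 nondyadic by (auto simp: less_le)
    have limpt: "z islimpt fibre y"
      using z unfolding closure_def by blast
    have "\<bar>R z - y\<bar> \<le> 1 / 2 ^ K" for K
    proof -
      obtain d where "0 < d" and d: "\<And>x. x \<noteq> z \<Longrightarrow> dist x z < d \<Longrightarrow> \<bar>R x - R z\<bar> \<le> 1 / 2 ^ K"
        using eventually_R_close[OF z_open pow2_times_not_Ints[OF z01 nondyadic], of K]
        unfolding eventually_at by blast
      then obtain x where "x \<in> fibre y" "x \<noteq> z" "dist x z < d"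
        using limpt unfolding islimpt_approachable by blast
      then show ?thesis
        using d[of x] by (auto simp: abs_minus_commute)
    qed
    then have "R z = y"
      using exists_inverse_pow2_less[of "\<bar>R z - y\<bar>"] by (meson not_le zero_less_abs_iff eq_iff_diff_eq_0)
    then show False
      using z z01 by simp
  qed
qed

section \<open>Fibres are null sets\<close>

lemma emeasure_lborel_vimage_affine:
  fixes c t :: real
  assumes "c \<noteq> 0" "C \<in> sets borel"
  shows "emeasure lborel ((\<lambda>x. c * x + t) -` C) = ennreal (1 / \<bar>c\<bar>) * emeasure lborel C"
proof -
  have vimage_eq: "(\<lambda>x. c * x + t) -` C = (\<lambda>x. (1 / c) *\<^sub>R x + (- t / c)) ` C"
    using assms(1) by (force simp: field_simps image_iff)
  have "(\<lambda>x :: real. c * x + t) \<in> borel_measurable borel"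
    by measurable
  from measurable_sets[OF this assms(2)]
  have "emeasure lborel ((\<lambda>x. c * x + t) -` C) = emeasure lebesgue ((\<lambda>x. c * x + t) -` C)"
    by simp
  also have "\<dots> = ennreal (1 / \<bar>c\<bar>) * emeasure lborel C"
    unfolding vimage_eq by (subst emeasure_lebesgue_affine) (use assms(2) in simp)
  finally show ?thesis .
qed

text \<open>By \<open>seq_R_tail_positions\<close>, a position sequence \<open>g\<close> with \<open>seq_R g = y\<close> has
  \<open>g 0 \<in> lead_positions y\<close> and \<open>seq_R (tail_positions g) = \<bar>2 y - 1\<bar>\<close>.\<close>

definition lead_positions :: "real \<Rightarrow> nat set" where
  "lead_positions y = {n. 1 \<le> n \<and> (even n \<longrightarrow> 1 / 2 \<le> y) \<and> (odd n \<longrightarrow> y \<le> 1 / 2)}"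

definition lead_weight :: "real \<Rightarrow> nat \<Rightarrow> real" where
  "lead_weight y n = (if n \<in> lead_positions y then 1 / 2 ^ n else 0)"

fun fibre_cover :: "nat \<Rightarrow> real \<Rightarrow> real set" where
  "fibre_cover 0 y = (if 0 \<le> y \<and> y \<le> 1 then {0..1} else {})"
| "fibre_cover (Suc K) y =
     (\<Union>n. if n \<in> lead_positions y then (\<lambda>x. 2 ^ n * x - 1) -` fibre_cover K \<bar>2 * y - 1\<bar> else {})"

lemma summable_lead_weight: "summable (lead_weight y)"
proof -
  have "summable (\<lambda>m. lead_weight y (Suc m))"
    by (rule summable_comparison_test'[OF summable_inverse_pow2]) (auto simp: lead_weight_def)
  then show ?thesis
    by (simp add: summable_Suc_iff)
qed

lemma suminf_lead_weight_Suc: "suminf (lead_weight y) = (\<Sum>m. lead_weight y (Suc m))"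
  using suminf_split_head[OF summable_lead_weight[of y]]
  by (simp add: lead_weight_def lead_positions_def)

lemma suminf_lead_weight_le_1: "suminf (lead_weight y) \<le> 1"
proof -
  have summable: "summable (\<lambda>m. lead_weight y (Suc m))"
    by (simp only: summable_Suc_iff summable_lead_weight)
  have "(\<Sum>m. lead_weight y (Suc m)) \<le> (\<Sum>m. 1 / 2 ^ Suc m)"
    by (rule suminf_le[OF _ summable summable_inverse_pow2]) (simp add: lead_weight_def)
  then show ?thesis
    using sums_inverse_pow2 suminf_lead_weight_Suc[of y] by (simp add: sums_iff)
qed

text \<open>Off \<open>y = 1/2\<close> only one parity is allowed, and each parity carries mass at most \<open>2/3\<close>.\<close>

lemma suminf_lead_weight_le_two_thirds:
  assumes "y \<noteq> 1 / 2"
  shows "suminf (lead_weight y) \<le> 2 / 3"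
proof -
  let ?even = "\<lambda>m. (if even m then 1 else 0) / 2 ^ Suc m :: real"
  have even: "?even sums (2 / 3)"
    by (rule sums_even_indicator)
  have odd: "(\<lambda>m. 1 / 2 ^ Suc m - ?even m) sums (1 - 2 / 3)"
    by (rule sums_diff[OF sums_inverse_pow2 even])
  have summable: "summable (\<lambda>m. lead_weight y (Suc m))"
    by (simp only: summable_Suc_iff summable_lead_weight)
  have "(\<Sum>m. lead_weight y (Suc m)) \<le> 2 / 3"
  proof (cases "y < 1 / 2")
    case True
    then have "lead_weight y (Suc m) \<le> ?even m" for m
      by (auto simp: lead_weight_def lead_positions_def)
    then show ?thesis
      using suminf_le[OF _ summable sums_summable[OF even]] even by (simp add: sums_iff)
  next
    case False
    then have "lead_weight y (Suc m) \<le> 1 / 2 ^ Suc m - ?even m" for m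
      using assms by (auto simp: lead_weight_def lead_positions_def)
    then show ?thesis
      using suminf_le[OF _ summable sums_summable[OF odd]] odd by (simp add: sums_iff)
  qed
  then show ?thesis
    using suminf_lead_weight_Suc[of y] by simp
qed

lemma sets_fibre_cover: "fibre_cover K y \<in> sets borel"
proof (induction K arbitrary: y)
  case (Suc K)
  have "(\<lambda>x :: real. 2 ^ n * x - 1) \<in> borel_measurable borel" for n :: nat
    by measurable
  from measurable_sets[OF this Suc.IH]
  have "(\<lambda>x :: real. 2 ^ n * x - 1) -` fibre_cover K \<bar>2 * y - 1\<bar> \<in> sets borel" for n :: nat
    by simp
  then show ?case
    by (auto intro!: sets.countable_UN)
qed simp

lemma emeasure_fibre_cover_Suc_le:
  "emeasure lborel (fibre_cover (Suc K) y)
     \<le> ennreal (suminf (lead_weight y)) * emeasure lborel (fibre_cover K \<bar>2 * y - 1\<bar>)"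
proof -
  let ?M = "emeasure lborel (fibre_cover K \<bar>2 * y - 1\<bar>)"
  let ?A = "\<lambda>n. if n \<in> lead_positions y then (\<lambda>x :: real. 2 ^ n * x - 1) -` fibre_cover K \<bar>2 * y - 1\<bar> else {}"
  have vimage: "emeasure lborel ((\<lambda>x :: real. 2 ^ n * x - 1) -` fibre_cover K \<bar>2 * y - 1\<bar>)
      = ennreal (1 / 2 ^ n) * ?M" for n :: nat
    using emeasure_lborel_vimage_affine[of "2 ^ n" "fibre_cover K \<bar>2 * y - 1\<bar>" "- 1"]
    by (simp add: sets_fibre_cover)
  have "range ?A \<subseteq> sets lborel"
    using sets_fibre_cover measurable_sets[of "\<lambda>x :: real. 2 ^ _ * x - 1" borel borel] by auto
  then have "emeasure lborel (fibre_cover (Suc K) y) \<le> (\<Sum>n. emeasure lborel (?A n))"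
    by (simp only: fibre_cover.simps) (rule emeasure_subadditive_countably)
  also have "(\<lambda>n. emeasure lborel (?A n)) = (\<lambda>n. ennreal (lead_weight y n) * ?M)"
    by (simp add: lead_weight_def vimage fun_eq_iff)
  also have "(\<Sum>n. ennreal (lead_weight y n) * ?M) = (\<Sum>n. ennreal (lead_weight y n)) * ?M"
    using ennreal_suminf_cmult[of ?M "\<lambda>n. ennreal (lead_weight y n)"] by (simp add: mult.commute)
  also have "(\<Sum>n. ennreal (lead_weight y n)) = ennreal (suminf (lead_weight y))"
    by (rule suminf_ennreal2[OF _ summable_lead_weight]) (simp add: lead_weight_def)
  finally show ?thesis .
qed

lemma emeasure_fibre_cover_0_1:
  assumes "y = 0 \<or> y = 1"
  shows "emeasure lborel (fibre_cover K y) \<le> ennreal ((2 / 3) ^ K)"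
  using assms
proof (induction K arbitrary: y)
  case (Suc K)
  then have "\<bar>2 * y - 1\<bar> = 1"
    by auto
  then have "emeasure lborel (fibre_cover (Suc K) y) \<le> ennreal (suminf (lead_weight y)) * ennreal ((2 / 3) ^ K)"
    using Suc.IH[of 1]
    by (intro order_trans[OF emeasure_fibre_cover_Suc_le[of K y]] mult_left_mono) auto
  also have "\<dots> \<le> ennreal (2 / 3) * ennreal ((2 / 3) ^ K)"
    using suminf_lead_weight_le_two_thirds[of y] Suc.prems by (intro mult_right_mono ennreal_leI) auto
  also have "\<dots> = ennreal ((2 / 3) ^ Suc K)"
    by (simp add: ennreal_mult[symmetric])
  finally show ?case .
qed auto

text \<open>The factor \<open>2/3\<close> is lost only at \<open>y = 1/2\<close>, which is followed by \<open>y = 0\<close>.\<close>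

lemma emeasure_fibre_cover_le: "emeasure lborel (fibre_cover K y) \<le> ennreal (3 / 2 * (2 / 3) ^ K)"
proof (induction K arbitrary: y)
  case 0
  then show ?case
    by (auto intro: order_trans[of _ 1])
next
  case (Suc K)
  show ?case
  proof (cases "y = 1 / 2")
    case True
    then have zero: "\<bar>2 * y - 1\<bar> = 0"
      by simp
    have "emeasure lborel (fibre_cover (Suc K) y) \<le> ennreal (suminf (lead_weight y)) * ennreal ((2 / 3) ^ K)"
      by (rule order_trans[OF emeasure_fibre_cover_Suc_le[of K y, unfolded zero]], rule mult_left_mono)
         (use emeasure_fibre_cover_0_1[of 0 K] in auto)
    also have "\<dots> \<le> ennreal 1 * ennreal ((2 / 3) ^ K)"
      using suminf_lead_weight_le_1[of y] by (intro mult_right_mono ennreal_leI) auto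
    finally show ?thesis
      by simp
  next
    case False
    have "emeasure lborel (fibre_cover (Suc K) y)
        \<le> ennreal (suminf (lead_weight y)) * ennreal (3 / 2 * (2 / 3) ^ K)"
      using Suc.IH[of "\<bar>2 * y - 1\<bar>"]
      by (intro order_trans[OF emeasure_fibre_cover_Suc_le[of K y]] mult_left_mono) auto
    also have "\<dots> \<le> ennreal (2 / 3) * ennreal (3 / 2 * (2 / 3) ^ K)"
      using suminf_lead_weight_le_two_thirds[OF False] by (intro mult_right_mono ennreal_leI) auto
    also have "\<dots> = ennreal (3 / 2 * (2 / 3) ^ Suc K)"
      by (simp add: ennreal_mult[symmetric])
    finally show ?thesis .
  qed
qed

lemma seq_value_in_fibre_cover:
  assumes "position_seq g"
  shows "seq_value g \<in> fibre_cover K (seq_R g)"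
  using assms
proof (induction K arbitrary: g)
  case 0
  then show ?case
    using seq_R_bounds[of g] seq_value_bounds[OF 0] by simp
next
  case (Suc K)
  let ?g' = "tail_positions g"
  have mono: "strict_mono g"
    using Suc.prems by (simp add: position_seq_def)
  have tail_value: "2 ^ g 0 * seq_value g - 1 = seq_value ?g'"
    using seq_value_tail_positions[OF Suc.prems] by (simp add: field_simps)
  have "\<bar>2 * seq_R g - 1\<bar> = seq_R ?g'"
    using seq_R_tail_positions[OF mono] seq_R_bounds[of ?g'] by (auto split: if_splits)
  moreover have "g 0 \<in> lead_positions (seq_R g)"
    using Suc.prems seq_R_tail_positions[OF mono] seq_R_bounds[of ?g']
    by (auto simp: lead_positions_def position_seq_def)
  moreover have "seq_value ?g' \<in> fibre_cover K (seq_R ?g')"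
    by (rule Suc.IH[OF position_seq_tail_positions[OF Suc.prems]])
  ultimately show ?case
    using tail_value by (simp only: fibre_cover.simps) (intro UN_I[of "g 0"], auto)
qed

lemma closure_fibre_subset_fibre_cover: "closure (fibre y) \<subseteq> dyadics \<union> fibre_cover K y"
proof
  fix x
  assume x: "x \<in> closure (fibre y)"
  have "0 \<in> dyadics"
    unfolding dyadics_def by (auto intro!: exI[of _ "0 :: int"] exI[of _ "0 :: nat"])
  moreover have "x \<in> fibre_cover K y" if "x \<in> fibre y" "x \<noteq> 0"
  proof -
    have x01: "0 < x" "x \<le> 1"
      using that by auto
    then have "seq_R (positions x) = y"
      using that R_eq_seq_R by simp
    then show ?thesis
      using seq_value_in_fibre_cover[OF position_seq_positions[OF x01]] seq_value_positions[OF x01]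
      by simp
  qed
  ultimately show "x \<in> dyadics \<union> fibre_cover K y"
    using x closure_fibre_diff_subset_dyadics[of y] by blast
qed

lemma closure_fibre_null: "closure (fibre y) \<in> null_sets lborel"
proof -
  have dyadics_null: "dyadics \<in> null_sets lborel"
    by (rule countable_imp_null_set_lborel[OF countable_dyadics])
  have bound: "emeasure lborel (closure (fibre y)) \<le> ennreal (3 / 2 * (2 / 3) ^ K)" for K
  proof -
    have "emeasure lborel (closure (fibre y)) \<le> emeasure lborel (dyadics \<union> fibre_cover K y)"
      using dyadics_null sets_fibre_cover
      by (intro emeasure_mono[OF closure_fibre_subset_fibre_cover]) auto
    also have "\<dots> = emeasure lborel (fibre_cover K y)"
      by (subst Un_commute, rule emeasure_Un_null_set) (use dyadics_null sets_fibre_cover in auto)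
    finally show ?thesis
      using emeasure_fibre_cover_le order_trans by blast
  qed
  have "emeasure lborel (closure (fibre y)) \<le> 0"
  proof (rule ennreal_le_epsilon)
    fix e :: real
    assume "0 < e"
    then obtain K where "(2 / 3 :: real) ^ K < e * (2 / 3)"
      using real_arch_pow_inv[of "e * (2 / 3)" "2 / 3"] by auto
    then have "3 / 2 * (2 / 3) ^ K \<le> e"
      by simp
    then have "emeasure lborel (closure (fibre y)) \<le> ennreal e"
      using bound[of K] by (metis ennreal_leI order_trans)
    then show "emeasure lborel (closure (fibre y)) \<le> 0 + ennreal e"
      by simp
  qed
  then show ?thesis
    by (simp add: null_sets_def)
qed

lemma null_set_connected_component_real:
  fixes S :: "real set"
  assumes "S \<in> null_sets lborel" "x \<in> S"
  shows "connected_component_set S x = {x}"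
proof (rule ccontr)
  assume "connected_component_set S x \<noteq> {x}"
  moreover have x_in: "x \<in> connected_component_set S x"
    using assms(2) by simp
  ultimately obtain u where u: "u \<in> connected_component_set S x" "u \<noteq> x"
    by blast
  have "min x u \<in> connected_component_set S x" "max x u \<in> connected_component_set S x"
    using x_in u(1) by (auto simp: min_def max_def)
  then have "{min x u..max x u} \<subseteq> connected_component_set S x"
    by (rule connected_contains_Icc[OF connected_connected_component])
  then have "{min x u..max x u} \<in> null_sets lborel"
    using null_sets_subset[OF assms(1)] connected_component_subset[of S x] by auto
  then show False
    using u(2) by (auto simp: min_def max_def split: if_splits)
qed

theorem proposition5p3:
  fixes y :: real
  assumes "y \<in> {0..1}"
  shows "cantor_set (closure (R -` {y} \<inter> {0..1}))
       \<and> closure (R -` {y} \<inter> {0..1}) \<in> null_sets lborel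
       \<and> closure (R -` {y} \<inter> {0..1}) - (R -` {y} \<inter> {0..1}) \<subseteq> dyadics
       \<and> countable (closure (R -` {y} \<inter> {0..1}) - (R -` {y} \<inter> {0..1}))"
proof -
  have "bounded (fibre y)"
    by (rule bounded_subset[OF bounded_closed_interval[of 0 1]]) auto
  then have "compact (closure (fibre y))"
    by simp
  moreover have "\<forall>x\<in>closure (fibre y). x islimpt closure (fibre y)"
    using fibre_islimpt limpt_of_closure by (metis closure_def Un_iff mem_Collect_eq)
  moreover have "\<forall>x\<in>closure (fibre y). connected_component_set (closure (fibre y)) x = {x}"
    using null_set_connected_component_real closure_fibre_null by blast
  ultimately have "cantor_set (closure (fibre y))"
    using fibre_nonempty[OF assms] closure_subset unfolding cantor_set_def by blast
  then show ?thesis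
    using closure_fibre_null closure_fibre_diff_subset_dyadics
      countable_subset[OF closure_fibre_diff_subset_dyadics countable_dyadics]
    by blast
qed

end
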